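(* For all integers $n\ge m\ge k+1\ge 3$, $\Gamma_{\times k,t}(K_n\,\Box\,K_m)\ge kn$.
   Context: A set $S\subseteq V(G)$ is a $k$-tuple total dominating set ($k$TDS) of a graph $G$ with $\delta(G)\ge k$ if $|N_G(x)\cap S|\ge k$ for every $x\in V(G)$. The upper $k$-tuple total domination number $\Gamma_{\times k,t}(G)$ is the maximum cardinality of a minimal (with respect to inclusion) $k$TDS of $G$. The Cartesian product $G\,\Box\,H$ has vertex set $V(G)\times V(H)$, with $(g_1,h_1)\sim(g_2,h_2)$ iff either $g_1=g_2$ and $h_1h_2\in E(H)$, or $h_1=h_2$ and $g_1g_2\in E(G)$. *)

theory Defs
  imports Main
begin

text \<open>A (finite simple) graph is given by a vertex set V and a symmetric irreflexive
adjacency relation E.\<close>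

definition open_nbhd :: "'a set \<Rightarrow> ('a \<Rightarrow> 'a \<Rightarrow> bool) \<Rightarrow> 'a \<Rightarrow> 'a set" where
  "open_nbhd V E x = {y \<in> V. E x y}"

definition is_kTDS :: "'a set \<Rightarrow> ('a \<Rightarrow> 'a \<Rightarrow> bool) \<Rightarrow> nat \<Rightarrow> 'a set \<Rightarrow> bool" where
  "is_kTDS V E k S \<longleftrightarrow> S \<subseteq> V \<and> (\<forall>x\<in>V. card (open_nbhd V E x \<inter> S) \<ge> k)"

definition is_minimal_kTDS :: "'a set \<Rightarrow> ('a \<Rightarrow> 'a \<Rightarrow> bool) \<Rightarrow> nat \<Rightarrow> 'a set \<Rightarrow> bool" where
  "is_minimal_kTDS V E k S \<longleftrightarrow> is_kTDS V E k S \<and> (\<forall>T. T \<subset> S \<longrightarrow> \<not> is_kTDS V E k T)"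

definition upper_ktuple_tdom :: "'a set \<Rightarrow> ('a \<Rightarrow> 'a \<Rightarrow> bool) \<Rightarrow> nat \<Rightarrow> nat" where
  "upper_ktuple_tdom V E k = Max (card ` {S. is_minimal_kTDS V E k S})"

definition complete_V :: "nat \<Rightarrow> nat set" where
  "complete_V n = {0..<n}"

definition complete_E :: "nat \<Rightarrow> nat \<Rightarrow> bool" where
  "complete_E x y \<longleftrightarrow> x \<noteq> y"

definition box_V :: "'a set \<Rightarrow> 'b set \<Rightarrow> ('a \<times> 'b) set" where
  "box_V V1 V2 = V1 \<times> V2"

definition box_E :: "('a \<Rightarrow> 'a \<Rightarrow> bool) \<Rightarrow> ('b \<Rightarrow> 'b \<Rightarrow> bool) \<Rightarrow> 'a \<times> 'b \<Rightarrow> 'a \<times> 'b \<Rightarrow> bool" where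
  "box_E E1 E2 p q \<longleftrightarrow> (fst p = fst q \<and> E2 (snd p) (snd q)) \<or> (snd p = snd q \<and> E1 (fst p) (fst q))"

end

theory Submission
  imports Defs
begin

text \<open>In the rook's graph \<open>K\<^sub>n \<box> K\<^sub>m\<close> take the first \<open>k\<close> columns
  \<open>S = {0..<n} \<times> {0..<k}\<close>. A vertex outside these columns sees exactly the \<open>k\<close> elements
  of \<open>S\<close> in its row, and a vertex inside sees \<open>k - 1\<close> of them in its row plus \<open>n - 1\<close> in its
  column, so \<open>S\<close> is a \<open>k\<close>-tuple total dominating set. It is minimal because every
  \<open>s \<in> S\<close> lies in the row of the vertex \<open>(i, k)\<close>, which sees exactly \<open>k\<close> elements of \<open>S\<close>;
  hence the upper number is at least \<open>|S| = kn\<close>.\<close>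

lemma is_minimal_kTDS_if_tight:
  assumes kTDS: "is_kTDS V E k S" and "finite V"
    and tight: "\<And>s. s \<in> S \<Longrightarrow> \<exists>x\<in>V. s \<in> open_nbhd V E x \<and> card (open_nbhd V E x \<inter> S) \<le> k"
  shows "is_minimal_kTDS V E k S"
  unfolding is_minimal_kTDS_def
proof (intro conjI allI impI kTDS)
  fix T assume "T \<subset> S"
  then obtain s where s: "s \<in> S" "s \<notin> T" by blast
  obtain x where x: "x \<in> V" "s \<in> open_nbhd V E x" "card (open_nbhd V E x \<inter> S) \<le> k"
    using tight[OF s(1)] by blast
  have fin: "finite (open_nbhd V E x \<inter> S)"
    using \<open>finite V\<close> by (auto simp: open_nbhd_def)
  have sub: "open_nbhd V E x \<inter> T \<subseteq> (open_nbhd V E x \<inter> S) - {s}"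
    using \<open>T \<subset> S\<close> s by blast
  have "card (open_nbhd V E x \<inter> T) \<le> card ((open_nbhd V E x \<inter> S) - {s})"
    using fin sub by (meson card_mono finite_Diff)
  also have "\<dots> < card (open_nbhd V E x \<inter> S)"
    using fin s(1) x(2) by (meson IntI card_Diff1_less)
  also have "\<dots> \<le> k"
    by (fact x(3))
  finally show "\<not> is_kTDS V E k T"
    using x(1) by (auto simp: is_kTDS_def not_le)
qed

lemma card_le_upper_ktuple_tdom:
  assumes "finite V" and "is_minimal_kTDS V E k S"
  shows "card S \<le> upper_ktuple_tdom V E k"
proof -
  have "{T. is_minimal_kTDS V E k T} \<subseteq> Pow V"
    by (auto simp: is_minimal_kTDS_def is_kTDS_def)
  then have "finite (card ` {T. is_minimal_kTDS V E k T})"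
    using \<open>finite V\<close> by (meson finite_Pow_iff finite_imageI finite_subset)
  then show ?thesis
    using assms(2) unfolding upper_ktuple_tdom_def by (intro Max_ge) auto
qed

abbreviation rook_V :: "nat \<Rightarrow> nat \<Rightarrow> (nat \<times> nat) set" where
  "rook_V n m \<equiv> box_V (complete_V n) (complete_V m)"

abbreviation rook_E :: "nat \<times> nat \<Rightarrow> nat \<times> nat \<Rightarrow> bool" where
  "rook_E \<equiv> box_E complete_E complete_E"

lemma rook_V_eq: "rook_V n m = {0..<n} \<times> {0..<m}"
  by (simp add: box_V_def complete_V_def)

lemma open_nbhd_rook:
  assumes "i < n" "j < m"
  shows "open_nbhd (rook_V n m) rook_E (i, j) = {i} \<times> ({0..<m} - {j}) \<union> ({0..<n} - {i}) \<times> {j}"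
  using assms by (auto simp: open_nbhd_def rook_V_eq box_E_def complete_E_def)

lemma open_nbhd_rook_Int_columns:
  assumes "i < n" "j < m" "k \<le> m"
  shows "open_nbhd (rook_V n m) rook_E (i, j) \<inter> {0..<n} \<times> {0..<k} =
    (if j < k then {i} \<times> ({0..<k} - {j}) \<union> ({0..<n} - {i}) \<times> {j} else {i} \<times> {0..<k})"
  using assms by (auto simp: open_nbhd_rook)

lemma card_open_nbhd_rook_Int_columns:
  assumes "i < n" "j < m" "k \<le> m"
  shows "card (open_nbhd (rook_V n m) rook_E (i, j) \<inter> {0..<n} \<times> {0..<k}) =
    (if j < k then (k - 1) + (n - 1) else k)"
proof (cases "j < k")
  case True
  have "card ({i} \<times> ({0..<k} - {j}) \<union> ({0..<n} - {i}) \<times> {j}) = (k - 1) + (n - 1)"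
    using True assms(1) by (subst card_Un_disjoint) (auto simp: card_cartesian_product)
  then show ?thesis
    using True assms by (simp add: open_nbhd_rook_Int_columns)
next
  case False
  then show ?thesis
    using assms by (simp add: open_nbhd_rook_Int_columns card_cartesian_product)
qed

lemma rook_columns_minimal_kTDS:
  assumes "k < m" and "2 \<le> n"
  shows "is_minimal_kTDS (rook_V n m) rook_E k ({0..<n} \<times> {0..<k})"
proof (rule is_minimal_kTDS_if_tight)
  show "is_kTDS (rook_V n m) rook_E k ({0..<n} \<times> {0..<k})"
    unfolding is_kTDS_def
  proof (intro conjI ballI)
    fix x assume "x \<in> rook_V n m"
    then obtain i j where "x = (i, j)" "i < n" "j < m"
      by (auto simp: rook_V_eq)
    then show "k \<le> card (open_nbhd (rook_V n m) rook_E x \<inter> {0..<n} \<times> {0..<k})"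
      using assms by (simp add: card_open_nbhd_rook_Int_columns) linarith
  qed (use assms in \<open>auto simp: rook_V_eq\<close>)
next
  fix s assume "s \<in> {0..<n} \<times> {0..<k}"
  then obtain i j where s: "s = (i, j)" "i < n" "j < k" by auto
  have "s \<in> open_nbhd (rook_V n m) rook_E (i, k)"
    using s assms by (simp add: open_nbhd_rook)
  moreover have "card (open_nbhd (rook_V n m) rook_E (i, k) \<inter> {0..<n} \<times> {0..<k}) \<le> k"
    using s assms by (simp add: card_open_nbhd_rook_Int_columns)
  ultimately show "\<exists>x\<in>rook_V n m. s \<in> open_nbhd (rook_V n m) rook_E x \<and>
      card (open_nbhd (rook_V n m) rook_E x \<inter> {0..<n} \<times> {0..<k}) \<le> k"
    using s assms by (intro bexI[of _ "(i, k)"]) (auto simp: rook_V_eq)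
qed (simp add: rook_V_eq)

theorem mainTheorem8:
  fixes n m k :: nat
  assumes "k + 1 \<ge> 3" and "m \<ge> k + 1" and "n \<ge> m"
  shows "upper_ktuple_tdom (box_V (complete_V n) (complete_V m)) (box_E complete_E complete_E) k \<ge> k * n"
proof -
  have "is_minimal_kTDS (rook_V n m) rook_E k ({0..<n} \<times> {0..<k})"
    using assms by (intro rook_columns_minimal_kTDS) auto
  then have "card ({0..<n} \<times> {0..<k}) \<le> upper_ktuple_tdom (rook_V n m) rook_E k"
    by (intro card_le_upper_ktuple_tdom) (simp add: rook_V_eq)
  then show ?thesis
    by (simp add: card_cartesian_product mult.commute)
qed

end
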